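(* Let $M$ be a finite monoid and $k$ a field. If there exists an idempotent $e\in M$ such that the monoid $eMe$ has two irreducible elements that are not associates (in $eMe$), then the monoid algebra $kM$ is of infinite representation type.
   Context: For an idempotent $e\in M$, $eMe=\{eme: m\in M\}$ is a monoid with identity $e$ under the multiplication of $M$. A non-unit $p$ in a monoid $N$ is irreducible if whenever $p=ab$ with $a,b\in N$, then $a$ or $b$ is a unit of $N$. Two elements $a,b\in N$ are associates if there exist units $u,v\in N$ with $a=ubv$. A finite-dimensional $k$-algebra is of infinite representation type if it has infinitely many isomorphism classes of finite-dimensional indecomposable modules. *)

theory Defs
  imports "Jordan_Normal_Form.Matrix"
begin

definition corner :: "'m::monoid_mult \<Rightarrow> 'm set" where
  "corner e = {e * m * e | m. True}"

definition corner_unit :: "'m::monoid_mult \<Rightarrow> 'm \<Rightarrow> bool" where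
  "corner_unit e u \<longleftrightarrow> u \<in> corner e \<and> (\<exists>v\<in>corner e. u * v = e \<and> v * u = e)"

definition corner_irreducible :: "'m::monoid_mult \<Rightarrow> 'm \<Rightarrow> bool" where
  "corner_irreducible e p \<longleftrightarrow> p \<in> corner e \<and> \<not> corner_unit e p \<and>
     (\<forall>a\<in>corner e. \<forall>b\<in>corner e. p = a * b \<longrightarrow> corner_unit e a \<or> corner_unit e b)"

definition corner_associates :: "'m::monoid_mult \<Rightarrow> 'm \<Rightarrow> 'm \<Rightarrow> bool" where
  "corner_associates e a b \<longleftrightarrow> (\<exists>u v. corner_unit e u \<and> corner_unit e v \<and> a = u * b * v)"

section \<open>Finite-dimensional modules over the monoid algebra kM, as matrix representations of M\<close>

definition is_rep :: "nat \<Rightarrow> ('m::monoid_mult \<Rightarrow> 'k::field mat) \<Rightarrow> bool" where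
  "is_rep n \<rho> \<longleftrightarrow> (\<forall>m. \<rho> m \<in> carrier_mat n n) \<and> \<rho> 1 = 1\<^sub>m n \<and>
     (\<forall>a b. \<rho> (a * b) = \<rho> a * \<rho> b)"

definition rep_iso :: "nat \<Rightarrow> ('m::monoid_mult \<Rightarrow> 'k::field mat) \<Rightarrow> nat \<Rightarrow> ('m \<Rightarrow> 'k mat) \<Rightarrow> bool" where
  "rep_iso n \<rho> n' \<sigma> \<longleftrightarrow> n = n' \<and>
     (\<exists>P \<in> carrier_mat n n. invertible_mat P \<and> (\<forall>m. P * \<rho> m = \<sigma> m * P))"

definition rep_sum :: "nat \<Rightarrow> ('m \<Rightarrow> 'k::field mat) \<Rightarrow> nat \<Rightarrow> ('m \<Rightarrow> 'k mat) \<Rightarrow> ('m \<Rightarrow> 'k mat)" where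
  "rep_sum n1 \<rho>1 n2 \<rho>2 = (\<lambda>m. four_block_mat (\<rho>1 m) (0\<^sub>m n1 n2) (0\<^sub>m n2 n1) (\<rho>2 m))"

definition indecomposable_rep :: "nat \<Rightarrow> ('m::monoid_mult \<Rightarrow> 'k::field mat) \<Rightarrow> bool" where
  "indecomposable_rep n \<rho> \<longleftrightarrow> is_rep n \<rho> \<and> n > 0 \<and>
     \<not> (\<exists>n1 \<rho>1 n2 \<rho>2. n1 > 0 \<and> n2 > 0 \<and> is_rep n1 \<rho>1 \<and> is_rep n2 \<rho>2 \<and>
          rep_iso n \<rho> (n1 + n2) (rep_sum n1 \<rho>1 n2 \<rho>2))"

definition infinite_rep_type :: "'m::monoid_mult itself \<Rightarrow> 'k::field itself \<Rightarrow> bool" where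
  "infinite_rep_type _ _ \<longleftrightarrow>
     \<not> (\<exists>S :: (nat \<times> ('m \<Rightarrow> 'k mat)) set. finite S \<and>
          (\<forall>n \<rho>. indecomposable_rep n \<rho> \<longrightarrow> (\<exists>(n', \<sigma>) \<in> S. rep_iso n \<rho> n' \<sigma>)))"

end

theory Submission
  imports Defs "Jordan_Normal_Form.DL_Rank" "HOL-Library.Cardinality"
begin

(* Let V = k^(2n+1) = k^n (+) k^(n+1) and let eMe act on V by sending units to the identity,
   associates of p and of q to the two embeddings of k^n into k^(n+1) shifting by 0 and by 1,
   and all other elements to 0. This is a representation: a product of two non-units is never
   associate to an irreducible, and the two embeddings compose to 0. As for the Kronecker
   module, its only idempotent endomorphisms are 0 and 1.
   The coinduced kM-module W = Hom_eMe(eM, V) contains a copy of V, so dim W >= 2n+1. An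
   idempotent endomorphism E of W induces an idempotent endomorphism of V, which is 0 or 1,
   and it determines E since every component of a function in W is a translate of its value
   at 1. Hence W is indecomposable, and letting n grow gives infinitely many isomorphism
   classes. *)

lemma index_mult_mat_sum:
  assumes "A \<in> carrier_mat nr n" "B \<in> carrier_mat n nc" "r < nr" "s < nc"
  shows "(A * B) $$ (r, s) = (\<Sum>t\<in>{0..<n}. A $$ (r, t) * B $$ (t, s))"
  using assms by (simp add: index_mult_mat scalar_prod_def)

lemma sum_atLeast0_lessThan_delta:
  assumes "\<And>t. t < n \<Longrightarrow> f t = (if t = a then g else 0)"
  shows "(\<Sum>t\<in>{0..<(n::nat)}. f t) = (if a < n then g else (0::'a::comm_monoid_add))"
proof -
  have "(\<Sum>t\<in>{0..<n}. f t) = (\<Sum>t\<in>{0..<n}. if t = a then g else 0)"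
    using assms by (intro sum.cong) auto
  also have "\<dots> = (if a < n then g else 0)" by simp
  finally show ?thesis .
qed

lemma mult_mat_vec_unit_vec:
  fixes A :: "'a::semiring_1 mat"
  assumes A: "A \<in> carrier_mat nr nc" and j: "j < nc"
  shows "A *\<^sub>v unit_vec nc j = col A j"
proof (rule eq_vecI)
  fix i assume "i < dim_vec (col A j)"
  then have i: "i < nr" using A by simp
  have "row A i \<bullet> unit_vec nc j = row A i $ j" by (rule scalar_prod_right_unit[OF j])
  then show "(A *\<^sub>v unit_vec nc j) $ i = col A j $ i" using A i j by simp
qed (use A in simp)

lemma mat_eqI_mult_vec:
  fixes A B :: "'a::semiring_1 mat"
  assumes A: "A \<in> carrier_mat nr nc" and B: "B \<in> carrier_mat nr nc"
    and eq: "\<And>v. v \<in> carrier_vec nc \<Longrightarrow> A *\<^sub>v v = B *\<^sub>v v"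
  shows "A = B"
proof (rule mat_col_eqI)
  fix j assume "j < dim_col B"
  then have j: "j < nc" using B by simp
  show "col A j = col B j"
    using mult_mat_vec_unit_vec[OF A j] mult_mat_vec_unit_vec[OF B j] eq[of "unit_vec nc j"] by simp
qed (use A B in auto)

lemma mult_mat_vec_zero: "A \<in> carrier_mat nr nc \<Longrightarrow> A *\<^sub>v 0\<^sub>v nc = (0\<^sub>v nr :: 'a::semiring_0 vec)"
  by (intro eq_vecI) (auto simp: scalar_prod_def)

lemma zero_mult_mat_vec: "v \<in> carrier_vec nc \<Longrightarrow> 0\<^sub>m nr nc *\<^sub>v v = (0\<^sub>v nr :: 'a::semiring_0 vec)"
  by (intro eq_vecI) (auto simp: scalar_prod_def)

lemma mult_mat_vec_cancel_left:
  fixes B :: "'a::field mat"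
  assumes B: "B \<in> carrier_mat nr nc"
    and inj: "\<And>c. c \<in> carrier_vec nc \<Longrightarrow> B *\<^sub>v c = 0\<^sub>v nr \<Longrightarrow> c = 0\<^sub>v nc"
    and u: "u \<in> carrier_vec nc" and w: "w \<in> carrier_vec nc" and eq: "B *\<^sub>v u = B *\<^sub>v w"
  shows "u = w"
proof -
  have "B *\<^sub>v (u - w) = 0\<^sub>v nr" using B u w eq by (simp add: mult_minus_distrib_mat_vec)
  then have "u - w = 0\<^sub>v nc" using inj u w by simp
  show ?thesis
  proof (rule eq_vecI)
    fix i assume "i < dim_vec w"
    then show "u $ i = w $ i" using arg_cong[OF \<open>u - w = 0\<^sub>v nc\<close>, of "\<lambda>v. v $ i"] u w by simp
  qed (use u w in simp)
qed

lemma invertible_matE: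
  fixes P :: "'a::semiring_1 mat"
  assumes P: "P \<in> carrier_mat n n" and inv: "invertible_mat P"
  obtains P' where "P' \<in> carrier_mat n n" "P * P' = 1\<^sub>m n" "P' * P = 1\<^sub>m n"
proof -
  obtain P' where P': "P * P' = 1\<^sub>m (dim_row P)" "P' * P = 1\<^sub>m (dim_row P')"
    using inv unfolding invertible_mat_def inverts_mat_def by blast
  have "dim_col P' = n" using arg_cong[OF P'(1), of dim_col] P by simp
  moreover have "dim_row P' = n" using arg_cong[OF P'(2), of dim_col] P by simp
  ultimately show ?thesis using that[of P'] P' P by auto
qed

text \<open>Pad Y and X with zeros to square matrices; Y then has a zero column, so det Y = 0,
  contradicting det Y * det X = det (Y * X) = 1.\<close>
lemma right_inverse_mat_dim_le:
  fixes X Y :: "'a::field mat"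
  assumes Y: "Y \<in> carrier_mat n d" and X: "X \<in> carrier_mat d n" and YX: "Y * X = 1\<^sub>m n"
  shows "n \<le> d"
proof (rule ccontr)
  assume "\<not> n \<le> d"
  then have dn: "d < n" by simp
  define Y' where "Y' = mat n n (\<lambda>(i, j). if j < d then Y $$ (i, j) else 0)"
  define X' where "X' = mat n n (\<lambda>(i, j). if i < d then X $$ (i, j) else 0)"
  have Y': "Y' \<in> carrier_mat n n" and X': "X' \<in> carrier_mat n n" unfolding Y'_def X'_def by auto
  have "Y' * X' = Y * X"
  proof (rule eq_matI)
    fix i j assume "i < dim_row (Y * X)" "j < dim_col (Y * X)"
    then have i: "i < n" and j: "j < n" using X Y by auto
    have "(Y' * X') $$ (i, j) = (\<Sum>t\<in>{0..<n}. Y' $$ (i, t) * X' $$ (t, j))"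
      by (rule index_mult_mat_sum[OF Y' X' i j])
    also have "\<dots> = (\<Sum>t\<in>{0..<d}. Y' $$ (i, t) * X' $$ (t, j))"
      by (rule sum.mono_neutral_right) (use dn i j in \<open>auto simp: X'_def\<close>)
    also have "\<dots> = (\<Sum>t\<in>{0..<d}. Y $$ (i, t) * X $$ (t, j))"
      by (rule sum.cong) (use dn i j in \<open>auto simp: X'_def Y'_def\<close>)
    also have "\<dots> = (Y * X) $$ (i, j)" by (rule index_mult_mat_sum[OF Y X i j, symmetric])
    finally show "(Y' * X') $$ (i, j) = (Y * X) $$ (i, j)" .
  qed (use X Y in \<open>auto simp: X'_def Y'_def\<close>)
  then have "det Y' * det X' = 1" using det_mult[OF Y' X'] YX by simp
  moreover have "det Y' = 0"
  proof -
    have "Y' *\<^sub>v unit_vec n (n - 1) = col Y' (n - 1)" using mult_mat_vec_unit_vec[OF Y'] dn by simp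
    also have "\<dots> = 0\<^sub>v n" unfolding Y'_def using dn by (intro eq_vecI) auto
    finally show ?thesis unfolding det_0_iff_vec_prod_zero_field[OF Y']
      using dn by (intro exI[of _ "unit_vec n (n - 1)"]) auto
  qed
  ultimately show False by simp
qed

definition vec_subspace :: "nat \<Rightarrow> 'a::field vec set \<Rightarrow> bool" where
  "vec_subspace n S \<longleftrightarrow> S \<subseteq> carrier_vec n \<and> 0\<^sub>v n \<in> S \<and>
     (\<forall>x\<in>S. \<forall>y\<in>S. x + y \<in> S) \<and> (\<forall>c. \<forall>x\<in>S. c \<cdot>\<^sub>v x \<in> S)"

definition mat_basis :: "nat \<Rightarrow> nat \<Rightarrow> 'a::field mat \<Rightarrow> 'a vec set \<Rightarrow> bool" where
  "mat_basis n d B S \<longleftrightarrow> B \<in> carrier_mat n d \<and>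
     (\<forall>c\<in>carrier_vec d. B *\<^sub>v c \<in> S) \<and> (\<forall>x\<in>S. \<exists>c\<in>carrier_vec d. B *\<^sub>v c = x) \<and>
     (\<forall>c\<in>carrier_vec d. B *\<^sub>v c = 0\<^sub>v n \<longrightarrow> c = 0\<^sub>v d)"

text \<open>A maximal linearly independent subset of S spans S; its elements are the columns of B.\<close>
lemma vec_subspace_has_mat_basis:
  fixes S :: "'a::field vec set"
  assumes S: "vec_subspace n S"
  obtains d B where "mat_basis n d B S"
proof -
  interpret VS: vec_space "TYPE('a)" n .
  have Sn: "S \<subseteq> carrier_vec n" and S0: "0\<^sub>v n \<in> S" and Sadd: "\<And>x y. x \<in> S \<Longrightarrow> y \<in> S \<Longrightarrow> x + y \<in> S"
    and Ssmult: "\<And>c x. x \<in> S \<Longrightarrow> c \<cdot>\<^sub>v x \<in> S"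
    using S unfolding vec_subspace_def by blast+
  let ?P = "\<lambda>A. A \<subseteq> S \<and> VS.lin_indpt A"
  have P0: "?P {}" unfolding VS.lin_dep_def by auto
  have bnd: "finite A \<and> card A \<le> n" if "?P A" for A
    using VS.li_le_dim[of A] that Sn VS.dim_is_n by auto
  obtain A where finA: "finite A" and maxA: "maximal A ?P"
    using maximal_exists[of ?P n "{}", OF bnd P0] by blast
  have AS: "A \<subseteq> S" and liA: "VS.lin_indpt A" using maxA unfolding maximal_def by auto
  have An: "A \<subseteq> carrier_vec n" using AS Sn by auto
  obtain bs where bs: "set bs = A" "distinct bs" using finite_distinct_list[OF finA] by blast
  define B where "B = mat_of_cols n bs"
  define d where "d = length bs"
  have B: "B \<in> carrier_mat n d" unfolding B_def d_def by auto
  have colsB: "cols B = bs" unfolding B_def using An bs by (intro cols_mat_of_cols) auto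
  have sub: "submodule class_ring S VS.V"
    by (rule submodule.intro) (use Sn S0 Sadd Ssmult vec_module in \<open>auto simp: class_ring_simps\<close>)
  have spanS: "VS.span A \<subseteq> S" by (rule VS.span_is_subset[OF AS sub])
  have Sspan: "S \<subseteq> VS.span A"
  proof
    fix w assume w: "w \<in> S"
    show "w \<in> VS.span A"
    proof (cases "w \<in> A")
      case True
      then show ?thesis using VS.in_own_span[OF An] by auto
    next
      case False
      have "VS.lin_dep (A \<union> {w})"
      proof (rule ccontr)
        assume "\<not> VS.lin_dep (A \<union> {w})"
        then have "A \<union> {w} = A" using maxA AS w unfolding maximal_def by blast
        then show False using False by auto
      qed
      then show ?thesis using VS.lin_dep_iff_in_span[OF An liA _ False] w Sn by auto
    qed
  qed
  have span_eq: "VS.span A = {y \<in> carrier_vec n. \<exists>x\<in>carrier_vec d. B *\<^sub>v x = y}"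
    using VS.col_space_eq[OF B] B unfolding VS.col_space_def colsB bs(1) by auto
  have "B *\<^sub>v c \<in> S" if "c \<in> carrier_vec d" for c
    using spanS B that unfolding span_eq by auto
  moreover have "\<exists>c\<in>carrier_vec d. B *\<^sub>v c = x" if "x \<in> S" for x
    using Sspan that unfolding span_eq by auto
  moreover have "c = 0\<^sub>v d" if c: "c \<in> carrier_vec d" and z: "B *\<^sub>v c = 0\<^sub>v n" for c
  proof (rule ccontr)
    assume "c \<noteq> 0\<^sub>v d"
    from VS.lin_depI[OF B c this z] colsB bs liA show False by auto
  qed
  ultimately have "mat_basis n d B S" unfolding mat_basis_def using B by blast
  then show ?thesis by (rule that)
qed

lemma mult_mat_cancel_left:
  fixes B :: "'a::field mat"
  assumes B: "B \<in> carrier_mat nr nc"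
    and inj: "\<And>c. c \<in> carrier_vec nc \<Longrightarrow> B *\<^sub>v c = 0\<^sub>v nr \<Longrightarrow> c = 0\<^sub>v nc"
    and X: "X \<in> carrier_mat nc k" and Y: "Y \<in> carrier_mat nc k" and eq: "B * X = B * Y"
  shows "X = Y"
proof (rule mat_col_eqI)
  fix j assume "j < dim_col Y"
  then have j: "j < k" using Y by auto
  have eqj: "B *\<^sub>v col X j = B *\<^sub>v col Y j"
    using col_mult2[OF B X j] col_mult2[OF B Y j] eq by simp
  show "col X j = col Y j" by (rule mult_mat_vec_cancel_left[OF B inj _ _ eqj]) (use X Y j in auto)
qed (use X Y in auto)

lemma invariant_subspace_rep:
  fixes \<rho> :: "'m::monoid_mult \<Rightarrow> 'k::field mat"
  assumes rep: "is_rep n \<rho>" and S: "vec_subspace n S"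
    and inv: "\<And>m x. x \<in> S \<Longrightarrow> \<rho> m *\<^sub>v x \<in> S"
  obtains d B \<sigma> where "mat_basis n d B S" "is_rep d \<sigma>" "\<And>m. \<rho> m * B = B * \<sigma> m"
proof -
  obtain d B where basis: "mat_basis n d B S" using vec_subspace_has_mat_basis[OF S] .
  have B: "B \<in> carrier_mat n d" and inS: "\<And>c. c \<in> carrier_vec d \<Longrightarrow> B *\<^sub>v c \<in> S"
    and span: "\<And>x. x \<in> S \<Longrightarrow> \<exists>c\<in>carrier_vec d. B *\<^sub>v c = x"
    and inj: "\<And>c. c \<in> carrier_vec d \<Longrightarrow> B *\<^sub>v c = 0\<^sub>v n \<Longrightarrow> c = 0\<^sub>v d"
    using basis unfolding mat_basis_def by auto
  have \<rho>: "\<rho> m \<in> carrier_mat n n" for m using rep unfolding is_rep_def by auto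
  define coord where "coord x = (SOME c. c \<in> carrier_vec d \<and> B *\<^sub>v c = x)" for x
  have coord: "coord x \<in> carrier_vec d \<and> B *\<^sub>v coord x = x" if "x \<in> S" for x
    unfolding coord_def using span[OF that] by (rule someI2_bex) blast
  define \<sigma> where "\<sigma> m = mat d d (\<lambda>(i, j). coord (\<rho> m *\<^sub>v col B j) $ i)" for m
  have \<sigma>: "\<sigma> m \<in> carrier_mat d d" for m unfolding \<sigma>_def by auto
  have colS: "col B j \<in> S" if "j < d" for j
    using inS[of "unit_vec d j"] mult_mat_vec_unit_vec[OF B that] by simp
  have comm: "\<rho> m * B = B * \<sigma> m" for m
  proof (rule mat_col_eqI)
    fix j assume "j < dim_col (B * \<sigma> m)"
    then have j: "j < d" using B \<sigma>[of m] by auto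
    have c: "coord (\<rho> m *\<^sub>v col B j) \<in> carrier_vec d"
      "B *\<^sub>v coord (\<rho> m *\<^sub>v col B j) = \<rho> m *\<^sub>v col B j"
      using coord inv colS j by blast+
    have "col (\<sigma> m) j = coord (\<rho> m *\<^sub>v col B j)"
      using c j unfolding \<sigma>_def by (intro eq_vecI) auto
    then show "col (\<rho> m * B) j = col (B * \<sigma> m) j"
      using col_mult2[OF \<rho> B j] col_mult2[OF B \<sigma> j] c by simp
  qed (use B \<sigma>[of m] \<rho>[of m] in auto)
  have \<rho>1: "\<rho> 1 = 1\<^sub>m n" and \<rho>mult: "\<And>a b. \<rho> (a * b) = \<rho> a * \<rho> b"
    using rep unfolding is_rep_def by auto
  have "\<sigma> 1 = 1\<^sub>m d"
  proof (rule mult_mat_cancel_left[OF B inj \<sigma> one_carrier_mat])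
    show "B * \<sigma> 1 = B * 1\<^sub>m d" using comm[of 1] \<rho>1 B by simp
  qed
  moreover have "\<sigma> (a * b) = \<sigma> a * \<sigma> b" for a b
  proof (rule mult_mat_cancel_left[OF B inj \<sigma> mult_carrier_mat[OF \<sigma> \<sigma>]])
    have "B * \<sigma> (a * b) = \<rho> a * (\<rho> b * B)"
      using comm[of "a * b"] \<rho>mult[of a b] assoc_mult_mat[OF \<rho> \<rho> B] by simp
    also have "\<dots> = (\<rho> a * B) * \<sigma> b" using comm[of b] assoc_mult_mat[OF \<rho> B \<sigma>] by simp
    also have "\<dots> = B * (\<sigma> a * \<sigma> b)" using comm[of a] assoc_mult_mat[OF B \<sigma> \<sigma>] by simp
    finally show "B * \<sigma> (a * b) = B * (\<sigma> a * \<sigma> b)" .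
  qed
  ultimately have "is_rep d \<sigma>" unfolding is_rep_def using \<sigma> by blast
  then show ?thesis using that basis comm by blast
qed

section \<open>Indecomposability via idempotents\<close>

definition idempotent_commutant_trivial :: "nat \<Rightarrow> 'a::field mat set \<Rightarrow> bool" where
  "idempotent_commutant_trivial n \<A> \<longleftrightarrow> (\<forall>T\<in>carrier_mat n n.
     T * T = T \<and> (\<forall>A\<in>\<A>. T * A = A * T) \<longrightarrow> T = 0\<^sub>m n n \<or> T = 1\<^sub>m n)"

lemma idempotent_commutant_trivial_mono:
  "\<A> \<subseteq> \<B> \<Longrightarrow> idempotent_commutant_trivial n \<A> \<Longrightarrow> idempotent_commutant_trivial n \<B>"
  unfolding idempotent_commutant_trivial_def by blast

text \<open>A decomposition yields the idempotent P^-1 diag(1, 0) P commuting with the representation.\<close>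
lemma indecomposable_repI:
  fixes \<sigma> :: "'m::monoid_mult \<Rightarrow> 'k::field mat"
  assumes rep: "is_rep d \<sigma>" and d: "d > 0"
    and triv: "idempotent_commutant_trivial d (range \<sigma>)"
  shows "indecomposable_rep d \<sigma>"
  unfolding indecomposable_rep_def
proof (intro conjI rep d notI)
  assume "\<exists>n1 \<rho>1 n2 \<rho>2. n1 > 0 \<and> n2 > 0 \<and> is_rep n1 \<rho>1 \<and> is_rep n2 \<rho>2 \<and>
          rep_iso d \<sigma> (n1 + n2) (rep_sum n1 \<rho>1 n2 \<rho>2)"
  then obtain n1 n2 and \<rho>1 \<rho>2 :: "'m \<Rightarrow> 'k mat" where n: "n1 > 0" "n2 > 0"
    and r1: "is_rep n1 \<rho>1" and r2: "is_rep n2 \<rho>2"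
    and iso: "rep_iso d \<sigma> (n1 + n2) (rep_sum n1 \<rho>1 n2 \<rho>2)" by blast
  define R where "R = rep_sum n1 \<rho>1 n2 \<rho>2"
  from iso obtain P where dd: "d = n1 + n2" and P: "P \<in> carrier_mat d d"
    and Pinv: "invertible_mat P" and PR: "\<And>m. P * \<sigma> m = R m * P"
    unfolding rep_iso_def R_def by blast
  obtain P' where P': "P' \<in> carrier_mat d d" "P * P' = 1\<^sub>m d" "P' * P = 1\<^sub>m d"
    using invertible_matE[OF P Pinv] by blast
  have c1: "\<rho>1 m \<in> carrier_mat n1 n1" and c2: "\<rho>2 m \<in> carrier_mat n2 n2" for m
    using r1 r2 unfolding is_rep_def by auto
  have \<sigma>: "\<sigma> m \<in> carrier_mat d d" for m using rep unfolding is_rep_def by auto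
  define \<Delta> :: "'k mat" where "\<Delta> = four_block_mat (1\<^sub>m n1) (0\<^sub>m n1 n2) (0\<^sub>m n2 n1) (0\<^sub>m n2 n2)"
  have \<Delta>: "\<Delta> \<in> carrier_mat d d" unfolding \<Delta>_def dd by auto
  have R: "R m \<in> carrier_mat d d" for m unfolding R_def rep_sum_def dd using c1 c2 by auto
  have \<Delta>\<Delta>: "\<Delta> * \<Delta> = \<Delta>" unfolding \<Delta>_def by (subst mult_four_block_mat) auto
  have \<Delta>R: "\<Delta> * R m = R m * \<Delta>" for m
    unfolding \<Delta>_def R_def rep_sum_def
    using mult_four_block_mat[OF one_carrier_mat zero_carrier_mat zero_carrier_mat zero_carrier_mat
        c1 zero_carrier_mat zero_carrier_mat c2]
      mult_four_block_mat[OF c1 zero_carrier_mat zero_carrier_mat c2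
        one_carrier_mat zero_carrier_mat zero_carrier_mat zero_carrier_mat] c1[of m] c2[of m]
    by simp
  note assoc = assoc_mult_mat[of _ d d _ d _ d]
  define E where "E = P' * \<Delta> * P"
  have E: "E \<in> carrier_mat d d" unfolding E_def using P' \<Delta> P by auto
  have "E * E = P' * \<Delta> * (P * P') * \<Delta> * P" unfolding E_def using P'(1) \<Delta> P by (simp add: assoc)
  also have "\<dots> = E" unfolding E_def P'(2) using P'(1) \<Delta> P by (simp add: assoc \<Delta>\<Delta>)
  finally have EE: "E * E = E" .
  have \<sigma>P': "\<sigma> m * P' = P' * R m" for m
  proof -
    have "P' * R m = P' * (R m * P) * P'" using P' P R[of m] by (simp add: assoc)
    also have "\<dots> = (P' * P) * \<sigma> m * P'" unfolding PR[symmetric] using P'(1) P \<sigma>[of m] by (simp add: assoc)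
    finally show ?thesis using \<sigma>[of m] P'(3) by simp
  qed
  have "E * \<sigma> m = \<sigma> m * E" for m
  proof -
    have "E * \<sigma> m = P' * (\<Delta> * (P * \<sigma> m))" unfolding E_def using P' \<Delta> P \<sigma>[of m] by (simp add: assoc)
    also have "\<dots> = P' * ((\<Delta> * R m) * P)" unfolding PR using P' \<Delta> P R[of m] by (simp add: assoc)
    also have "\<dots> = (P' * R m) * (\<Delta> * P)" unfolding \<Delta>R using P' \<Delta> P R[of m] by (simp add: assoc)
    also have "\<dots> = \<sigma> m * E" unfolding \<sigma>P'[symmetric] E_def using P' \<Delta> P \<sigma>[of m] by (simp add: assoc)
    finally show ?thesis .
  qed
  then have "E = 0\<^sub>m d d \<or> E = 1\<^sub>m d" using triv E EE unfolding idempotent_commutant_trivial_def by blast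
  moreover have "P * E * P' = (P * P') * \<Delta> * (P * P')" unfolding E_def using P'(1) \<Delta> P by (simp add: assoc)
  then have "\<Delta> = P * E * P'" using P'(2) \<Delta> by simp
  ultimately have "\<Delta> = 0\<^sub>m d d \<or> \<Delta> = 1\<^sub>m d" using P P' by auto
  moreover have "\<Delta> $$ (0, 0) = 1" "\<Delta> $$ (n1, n1) = 0" unfolding \<Delta>_def using n by auto
  ultimately show False using n dd by auto
qed

lemma infinite_rep_typeI:
  assumes "\<And>N. \<exists>d (\<sigma> :: 'm::monoid_mult \<Rightarrow> 'k::field mat). N \<le> d \<and> indecomposable_rep d \<sigma>"
  shows "infinite_rep_type TYPE('m) TYPE('k)"
  unfolding infinite_rep_type_def
proof
  assume "\<exists>S :: (nat \<times> ('m \<Rightarrow> 'k mat)) set. finite S \<and>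
          (\<forall>n \<rho>. indecomposable_rep n \<rho> \<longrightarrow> (\<exists>(n', \<sigma>) \<in> S. rep_iso n \<rho> n' \<sigma>))"
  then obtain S :: "(nat \<times> ('m \<Rightarrow> 'k mat)) set" where S: "finite S"
    and cov: "\<And>n \<rho>. indecomposable_rep n \<rho> \<Longrightarrow> (\<exists>(n', \<sigma>) \<in> S. rep_iso n \<rho> n' \<sigma>)" by blast
  obtain d and \<sigma> :: "'m \<Rightarrow> 'k mat" where d: "Suc (Max (fst ` S)) \<le> d"
    and ind: "indecomposable_rep d \<sigma>"
    using assms by blast
  obtain n' \<sigma>' where "(n', \<sigma>') \<in> S" "rep_iso d \<sigma> n' \<sigma>'" using cov[OF ind] by blast
  then have "d \<in> fst ` S" unfolding rep_iso_def by force
  then show False using d S by (meson Max_ge finite_imageI not_less_eq_eq order_refl)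
qed

section \<open>The Kronecker module\<close>

text \<open>Writing k^(2n+1) = k^n \<oplus> k^(n+1), both matrices map k^n into k^(n+1): kron_P sends
  the i-th basis vector to the i-th one, kron_Q to the (i+1)-th one.\<close>

definition kron_P :: "nat \<Rightarrow> 'a::zero_neq_one mat" where
  "kron_P n = mat (2*n+1) (2*n+1) (\<lambda>(r, s). if s < n \<and> r = n + s then 1 else 0)"

definition kron_Q :: "nat \<Rightarrow> 'a::zero_neq_one mat" where
  "kron_Q n = mat (2*n+1) (2*n+1) (\<lambda>(r, s). if s < n \<and> r = n + s + 1 then 1 else 0)"

lemma kron_P_carrier [simp]: "kron_P n \<in> carrier_mat (2*n+1) (2*n+1)"
  unfolding kron_P_def by simp

lemma kron_Q_carrier [simp]: "kron_Q n \<in> carrier_mat (2*n+1) (2*n+1)"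
  unfolding kron_Q_def by simp

context
  fixes T :: "'a::semiring_1 mat" and n r s :: nat
  assumes T: "T \<in> carrier_mat (2*n+1) (2*n+1)" and r: "r < 2*n+1" and s: "s < 2*n+1"
begin

lemma mult_kron_P_index: "(T * kron_P n) $$ (r, s) = (if s < n then T $$ (r, n + s) else 0)"
  unfolding index_mult_mat_sum[OF T kron_P_carrier r s]
  by (rule trans[OF sum_atLeast0_lessThan_delta[where a = "n + s"
        and g = "if s < n then T $$ (r, n + s) else 0"]]) (use r s in \<open>auto simp: kron_P_def\<close>)

lemma kron_P_mult_index: "(kron_P n * T) $$ (r, s) = (if n \<le> r \<and> r < 2*n then T $$ (r - n, s) else 0)"
  unfolding index_mult_mat_sum[OF kron_P_carrier T r s]
  by (rule trans[OF sum_atLeast0_lessThan_delta[where a = "r - n"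
        and g = "if n \<le> r \<and> r < 2*n then T $$ (r - n, s) else 0"]]) (use r s in \<open>auto simp: kron_P_def\<close>)

lemma mult_kron_Q_index: "(T * kron_Q n) $$ (r, s) = (if s < n then T $$ (r, n + s + 1) else 0)"
  unfolding index_mult_mat_sum[OF T kron_Q_carrier r s]
  by (rule trans[OF sum_atLeast0_lessThan_delta[where a = "n + s + 1"
        and g = "if s < n then T $$ (r, n + s + 1) else 0"]]) (use r s in \<open>auto simp: kron_Q_def\<close>)

lemma kron_Q_mult_index: "(kron_Q n * T) $$ (r, s) = (if n < r then T $$ (r - n - 1, s) else 0)"
  unfolding index_mult_mat_sum[OF kron_Q_carrier T r s]
  by (rule trans[OF sum_atLeast0_lessThan_delta[where a = "r - n - 1"
        and g = "if n < r then T $$ (r - n - 1, s) else 0"]]) (use r s in \<open>auto simp: kron_Q_def\<close>)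

end

lemma kron_mult_zero:
  assumes X: "X \<in> {kron_P n, kron_Q n}" and Y: "Y \<in> {kron_P n, kron_Q n}"
  shows "X * Y = (0\<^sub>m (2*n+1) (2*n+1) :: 'a::semiring_1 mat)"
proof (rule eq_matI)
  fix r s assume "r < dim_row (0\<^sub>m (2*n+1) (2*n+1) :: 'a mat)" "s < dim_col (0\<^sub>m (2*n+1) (2*n+1) :: 'a mat)"
  then have r: "r < 2*n+1" and s: "s < 2*n+1" by auto
  have Xc: "X \<in> carrier_mat (2*n+1) (2*n+1)" using X kron_P_carrier kron_Q_carrier by blast
  have "X $$ (r, t) = 0" if "n \<le> t" "t < 2*n+1" for t
    using X that r unfolding kron_P_def kron_Q_def by auto
  then show "(X * Y) $$ (r, s) = 0\<^sub>m (2*n+1) (2*n+1) $$ (r, s)"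
    using Y mult_kron_P_index[OF Xc r s] mult_kron_Q_index[OF Xc r s] r s by auto
next
  show "dim_row (X * Y) = dim_row (0\<^sub>m (2*n+1) (2*n+1) :: 'a mat)"
    "dim_col (X * Y) = dim_col (0\<^sub>m (2*n+1) (2*n+1) :: 'a mat)"
    using X Y kron_P_carrier[of n] kron_Q_carrier[of n] by auto
qed

lemma shift_invariant_diagonal:
  fixes Z :: "nat \<Rightarrow> nat \<Rightarrow> 'a::zero"
  assumes shift: "\<And>a b. a < n \<Longrightarrow> b < n \<Longrightarrow> Z (Suc a) (Suc b) = Z a b"
    and first_row: "\<And>b. b < n \<Longrightarrow> Z 0 (Suc b) = 0"
    and last_row: "\<And>b. b < n \<Longrightarrow> Z n b = 0"
    and a: "a \<le> n" and b: "b \<le> n"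
  shows "Z a b = (if a = b then Z 0 0 else 0)"
proof (cases "a \<le> b")
  case True
  have "Z a b = Z 0 (b - a)" using True b
  proof (induction a arbitrary: b)
    case 0
    then show ?case by simp
  next
    case (Suc a)
    then obtain b' where b': "b = Suc b'" by (cases b) auto
    then show ?case using shift[of a b'] Suc.IH[of b'] Suc.prems by simp
  qed
  moreover have "Z 0 (b - a) = 0" if ab: "a < b"
  proof -
    obtain k where "b = Suc (a + k)" using less_imp_Suc_add[OF ab] by blast
    then show ?thesis using first_row[of k] b by simp
  qed
  ultimately show ?thesis using True by auto
next
  case False
  have "Z a b = Z (a + j) (b + j)" if "a + j \<le> n" for j
    using that
  proof (induction j)
    case 0
    then show ?case by simp
  next
    case (Suc j)
    then show ?case using shift[of "a + j" "b + j"] False by simp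
  qed
  from this[of "n - a"] show ?thesis using last_row[of "b + (n - a)"] False a by simp
qed

lemma commute_kron_blocks:
  fixes T :: "'a::semiring_1 mat"
  assumes T: "T \<in> carrier_mat (2*n+1) (2*n+1)"
    and TP: "T * kron_P n = kron_P n * T" and TQ: "T * kron_Q n = kron_Q n * T"
  obtains c where
    "\<And>a b. a < n \<Longrightarrow> b < n \<Longrightarrow> T $$ (a, b) = (if a = b then c else 0)"
    "\<And>a b. a \<le> n \<Longrightarrow> b \<le> n \<Longrightarrow> T $$ (n + a, n + b) = (if a = b then c else 0)"
    "\<And>a b. a < n \<Longrightarrow> b \<le> n \<Longrightarrow> T $$ (a, n + b) = 0"
proof -
  have P: "T $$ (r, n + s) = (if n \<le> r \<and> r < 2*n then T $$ (r - n, s) else 0)"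
    if "r < 2*n+1" "s < n" for r s
    using arg_cong[OF TP, of "\<lambda>M. M $$ (r, s)"] mult_kron_P_index[OF T that(1), of s]
      kron_P_mult_index[OF T that(1), of s] that by auto
  have Q: "T $$ (r, n + s + 1) = (if n < r then T $$ (r - n - 1, s) else 0)"
    if "r < 2*n+1" "s < n" for r s
    using arg_cong[OF TQ, of "\<lambda>M. M $$ (r, s)"] mult_kron_Q_index[OF T that(1), of s]
      kron_Q_mult_index[OF T that(1), of s] that by auto
  define Z where "Z a b = T $$ (n + a, n + b)" for a b
  have upper: "T $$ (a, b) = Z a b" if "a < n" "b < n" for a b
    unfolding Z_def using P[of "n + a" b] that by simp
  have Z: "Z a b = (if a = b then Z 0 0 else 0)" if "a \<le> n" "b \<le> n" for a b
  proof (rule shift_invariant_diagonal[OF _ _ _ that])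
    show "Z (Suc a) (Suc b) = Z a b" if "a < n" "b < n" for a b
      using Q[of "n + a + 1" b] upper[OF that] that unfolding Z_def by simp
    show "Z 0 (Suc b) = 0" if "b < n" for b
      using Q[of n b] that unfolding Z_def by simp
    show "Z n b = 0" if "b < n" for b
      using P[of "n + n" b] that unfolding Z_def by simp
  qed
  have "T $$ (a, s) = 0" if "a < n" "n \<le> s" "s < 2*n+1" for a s
    using arg_cong[OF TP, of "\<lambda>M. M $$ (n + a, s)"] mult_kron_P_index[OF T _ that(3), of "n + a"]
      kron_P_mult_index[OF T _ that(3), of "n + a"] that by auto
  then show ?thesis using that[of "Z 0 0"] upper Z unfolding Z_def by auto
qed

lemma idempotent_commutant_kron:
  "idempotent_commutant_trivial (2*n+1) {kron_P n, kron_Q n :: 'a::field mat}"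
  unfolding idempotent_commutant_trivial_def
proof (intro ballI impI)
  let ?K = "2*n+1"
  fix T :: "'a mat"
  assume T: "T \<in> carrier_mat ?K ?K"
    and "T * T = T \<and> (\<forall>A\<in>{kron_P n, kron_Q n}. T * A = A * T)"
  then have TT: "T * T = T" and TP: "T * kron_P n = kron_P n * T"
    and TQ: "T * kron_Q n = kron_Q n * T" by auto
  obtain c where upper: "\<And>a b. a < n \<Longrightarrow> b < n \<Longrightarrow> T $$ (a, b) = (if a = b then c else 0)"
    and lower: "\<And>a b. a \<le> n \<Longrightarrow> b \<le> n \<Longrightarrow> T $$ (n + a, n + b) = (if a = b then c else 0)"
    and upper_right: "\<And>a b. a < n \<Longrightarrow> b \<le> n \<Longrightarrow> T $$ (a, n + b) = 0"
    using commute_kron_blocks[OF T TP TQ] by blast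
  have lower': "T $$ (r, u) = (if u = r then c else 0)" if "n \<le> r" "r < ?K" "n \<le> u" "u < ?K" for r u
    using lower[of "r - n" "u - n"] that by auto
  have sq: "T $$ (r, s) = (\<Sum>u\<in>{0..<?K}. T $$ (r, u) * T $$ (u, s))" if "r < ?K" "s < ?K" for r s
    using index_mult_mat_sum[OF T T that] TT by simp
  have "c = c * c"
  proof -
    have "c = T $$ (n, n)" using lower[of 0 0] by simp
    also have "\<dots> = (\<Sum>u\<in>{0..<?K}. T $$ (n, u) * T $$ (u, n))" by (rule sq) auto
    also have "\<dots> = c * c"
    proof (rule trans[OF sum_atLeast0_lessThan_delta[where a = n]])
      show "T $$ (n, u) * T $$ (u, n) = (if u = n then c * c else 0)" if "u < ?K" for u
        using upper_right[of u 0] lower'[of n u] lower'[of u n] that by (cases "u < n") auto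
    qed simp
    finally show ?thesis .
  qed
  then have c01: "c = 0 \<or> c = 1" by (metis mult_cancel_left1 mult_zero_right)
  text \<open>Idempotency forces each entry x of the lower left block to satisfy x = c x + c x.\<close>
  have lower_left: "T $$ (r, s) = 0" if r: "n \<le> r" "r < ?K" and s: "s < n" for r s
  proof -
    have "T $$ (r, s) = (\<Sum>u\<in>{0..<?K}. T $$ (r, u) * T $$ (u, s))" by (rule sq) (use r s in auto)
    also have "\<dots> = (\<Sum>u\<in>{0..<?K}. (if u = s then c * T $$ (r, s) else 0)
        + (if u = r then c * T $$ (r, s) else 0))"
    proof (rule sum.cong[OF refl])
      fix u assume "u \<in> {0..<?K}"
      then show "T $$ (r, u) * T $$ (u, s) = (if u = s then c * T $$ (r, s) else 0)
          + (if u = r then c * T $$ (r, s) else 0)"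
        using upper[of u s] lower'[of r u] r s by (cases "u < n") (auto simp: mult.commute)
    qed
    also have "\<dots> = c * T $$ (r, s) + c * T $$ (r, s)" using r s by (simp add: sum.distrib)
    finally have x: "T $$ (r, s) = c * T $$ (r, s) + c * T $$ (r, s)" .
    from c01 show ?thesis
    proof
      assume "c = 1"
      then have "T $$ (r, s) = T $$ (r, s) + T $$ (r, s)" using x by (simp only: mult_1)
      then show ?thesis by (simp only: add_cancel_right_right)
    qed (use x in simp)
  qed
  have "T $$ (r, s) = (if r = s then c else 0)" if "r < ?K" "s < ?K" for r s
    using upper[of r s] upper_right[of r "s - n"] lower'[of r s] lower_left[of r s] lower_left[of s r]
      that by (cases "r < n"; cases "s < n") auto
  then show "T = 0\<^sub>m ?K ?K \<or> T = 1\<^sub>m ?K" using c01 T by (auto intro!: eq_matI)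
qed

locale idempotent_elem =
  fixes e :: "'m::monoid_mult"
  assumes idem: "e * e = e"
begin

lemma corner_iff: "x \<in> corner e \<longleftrightarrow> e * x = x \<and> x * e = x"
proof
  assume "x \<in> corner e"
  then obtain m where "x = e * m * e" unfolding corner_def by auto
  then show "e * x = x \<and> x * e = x" using idem by (simp add: mult.assoc[symmetric]) (simp add: mult.assoc)
next
  assume "e * x = x \<and> x * e = x"
  then have "x = e * x * e" by simp
  then show "x \<in> corner e" unfolding corner_def by auto
qed

lemma corner_sandwich [simp]: "e * x * e \<in> corner e"
  unfolding corner_def by auto

lemma idem_in_corner [simp]: "e \<in> corner e"
  using corner_sandwich[of 1] idem by simp

lemma corner_mult: "x \<in> corner e \<Longrightarrow> y \<in> corner e \<Longrightarrow> x * y \<in> corner e"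
  unfolding corner_iff by (metis mult.assoc)

lemma corner_unit_in_corner: "corner_unit e u \<Longrightarrow> u \<in> corner e"
  unfolding corner_unit_def by blast

lemma corner_unitE:
  assumes "corner_unit e u"
  obtains u' where "corner_unit e u'" "u * u' = e" "u' * u = e"
  using assms unfolding corner_unit_def by blast

lemma corner_unit_idem: "corner_unit e e"
  unfolding corner_unit_def using idem by auto

lemma corner_unit_mult: "corner_unit e u \<Longrightarrow> corner_unit e v \<Longrightarrow> corner_unit e (u * v)"
proof -
  assume "corner_unit e u" "corner_unit e v"
  then obtain u' v' where u: "u \<in> corner e" "u' \<in> corner e" "u * u' = e" "u' * u = e"
    and v: "v \<in> corner e" "v' \<in> corner e" "v * v' = e" "v' * v = e"
    unfolding corner_unit_def by auto
  have "u * v * (v' * u') = e" "v' * u' * (u * v) = e" using u v corner_iff by (metis mult.assoc)+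
  then show ?thesis unfolding corner_unit_def using u v corner_mult by blast
qed

lemma corner_unit_mult_left_iff:
  assumes u: "corner_unit e u" and y: "y \<in> corner e"
  shows "corner_unit e (u * y) \<longleftrightarrow> corner_unit e y"
proof
  obtain u' where u': "corner_unit e u'" "u' * u = e" using corner_unitE[OF u] by blast
  assume "corner_unit e (u * y)"
  then have "corner_unit e (u' * (u * y))" using corner_unit_mult[OF u'(1)] by blast
  then show "corner_unit e y" using u' y corner_iff by (simp add: mult.assoc[symmetric])
qed (rule corner_unit_mult[OF u])

lemma corner_unit_mult_right_iff:
  assumes u: "corner_unit e u" and y: "y \<in> corner e"
  shows "corner_unit e (y * u) \<longleftrightarrow> corner_unit e y"
proof
  obtain u' where u': "corner_unit e u'" "u * u' = e" using corner_unitE[OF u] by blast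
  assume "corner_unit e (y * u)"
  then have "corner_unit e (y * u * u')" using corner_unit_mult u'(1) by blast
  then show "corner_unit e y" using u' y corner_iff by (simp add: mult.assoc)
qed (rule corner_unit_mult[OF _ u])

lemma corner_associates_refl: "x \<in> corner e \<Longrightarrow> corner_associates e x x"
  unfolding corner_associates_def using corner_unit_idem corner_iff by metis

lemma corner_associates_sym:
  assumes xp: "corner_associates e x p" and p: "p \<in> corner e"
  shows "corner_associates e p x"
proof -
  obtain u v where uv: "corner_unit e u" "corner_unit e v" "x = u * p * v"
    using xp unfolding corner_associates_def by blast
  obtain u' where u': "corner_unit e u'" "u' * u = e" using corner_unitE[OF uv(1)] by blast
  obtain v' where v': "corner_unit e v'" "v * v' = e" using corner_unitE[OF uv(2)] by blast
  have "u' * x * v' = (u' * u) * p * (v * v')" using uv by (simp add: mult.assoc)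
  also have "\<dots> = p" using u' v' p corner_iff by simp
  finally show ?thesis unfolding corner_associates_def using u' v' by metis
qed

lemma corner_associates_mult_left_iff:
  assumes u: "corner_unit e u" and y: "y \<in> corner e"
  shows "corner_associates e (u * y) p \<longleftrightarrow> corner_associates e y p"
proof
  assume "corner_associates e y p"
  then obtain a b where ab: "corner_unit e a" "corner_unit e b" "y = a * p * b"
    unfolding corner_associates_def by blast
  have "u * y = (u * a) * p * b" using ab by (simp add: mult.assoc)
  then show "corner_associates e (u * y) p"
    unfolding corner_associates_def using corner_unit_mult[OF u ab(1)] ab(2) by blast
next
  assume "corner_associates e (u * y) p"
  then obtain a b where ab: "corner_unit e a" "corner_unit e b" "u * y = a * p * b"
    unfolding corner_associates_def by blast
  obtain u' where u': "corner_unit e u'" "u' * u = e" using corner_unitE[OF u] by blast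
  have "y = u' * (u * y)" using u' y corner_iff by (simp add: mult.assoc[symmetric])
  also have "\<dots> = (u' * a) * p * b" using ab by (simp add: mult.assoc)
  finally show "corner_associates e y p"
    unfolding corner_associates_def using corner_unit_mult[OF u'(1) ab(1)] ab(2) by blast
qed

lemma corner_associates_mult_right_iff:
  assumes u: "corner_unit e u" and y: "y \<in> corner e"
  shows "corner_associates e (y * u) p \<longleftrightarrow> corner_associates e y p"
proof
  assume "corner_associates e y p"
  then obtain a b where ab: "corner_unit e a" "corner_unit e b" "y = a * p * b"
    unfolding corner_associates_def by blast
  have "y * u = a * p * (b * u)" using ab by (simp add: mult.assoc)
  then show "corner_associates e (y * u) p"
    unfolding corner_associates_def using corner_unit_mult[OF ab(2) u] ab(1) by blast
next
  assume "corner_associates e (y * u) p"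
  then obtain a b where ab: "corner_unit e a" "corner_unit e b" "y * u = a * p * b"
    unfolding corner_associates_def by blast
  obtain u' where u': "corner_unit e u'" "u * u' = e" using corner_unitE[OF u] by blast
  have "y = (y * u) * u'" using u' y corner_iff by (simp add: mult.assoc)
  also have "\<dots> = a * p * (b * u')" using ab by (simp add: mult.assoc)
  finally show "corner_associates e y p"
    unfolding corner_associates_def using corner_unit_mult[OF ab(2) u'(1)] ab(1) by blast
qed

end

locale finite_corner = idempotent_elem e for e :: "'m::monoid_mult" +
  assumes finite_corner: "finite (corner e)"
begin

text \<open>Left multiplication by y is injective on the finite set eMe, hence onto; so y has a
  right inverse w, and x = x y w = w.\<close>
lemma corner_inverse_commute:
  assumes x: "x \<in> corner e" and y: "y \<in> corner e" and xy: "x * y = e"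
  shows "y * x = e"
proof -
  have "inj_on (\<lambda>t. y * t) (corner e)"
  proof (rule inj_onI)
    fix s t assume "s \<in> corner e" "t \<in> corner e" "y * s = y * t"
    moreover from \<open>y * s = y * t\<close> have "x * y * s = x * y * t" by (simp add: mult.assoc)
    ultimately show "s = t" using xy corner_iff by simp
  qed
  moreover have "(\<lambda>t. y * t) ` corner e \<subseteq> corner e" using y corner_mult by auto
  ultimately have "(\<lambda>t. y * t) ` corner e = corner e"
    using finite_corner by (simp add: endo_inj_surj)
  then obtain w where w: "w \<in> corner e" "y * w = e" using idem_in_corner by (metis imageE)
  have "x = x * y * w" using w x corner_iff by (simp add: mult.assoc)
  then have "x = w" using xy w corner_iff by simp
  then show ?thesis using w by simp
qed

lemma corner_unit_mult_iff:
  assumes x: "x \<in> corner e" and y: "y \<in> corner e"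
  shows "corner_unit e (x * y) \<longleftrightarrow> corner_unit e x \<and> corner_unit e y"
proof
  assume "corner_unit e (x * y)"
  then obtain w where w: "w \<in> corner e" "x * y * w = e" "w * (x * y) = e"
    unfolding corner_unit_def by auto
  have yw: "y * w \<in> corner e" "w * x \<in> corner e" using corner_mult x y w by auto
  have "x * (y * w) = e" "(w * x) * y = e" using w by (simp_all add: mult.assoc)
  then show "corner_unit e x \<and> corner_unit e y"
    using corner_inverse_commute x y yw unfolding corner_unit_def by blast
qed (use corner_unit_mult in blast)

lemma corner_irreducible_not_associates_mult:
  assumes p: "corner_irreducible e p" and x: "x \<in> corner e" and y: "y \<in> corner e"
    and nx: "\<not> corner_unit e x" and ny: "\<not> corner_unit e y"
  shows "\<not> corner_associates e (x * y) p"
proof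
  have pc: "p \<in> corner e" using p unfolding corner_irreducible_def by blast
  assume "corner_associates e (x * y) p"
  then obtain u v where uv: "corner_unit e u" "corner_unit e v" "p = u * (x * y) * v"
    using corner_associates_sym[OF _ pc] unfolding corner_associates_def by blast
  have uc: "u \<in> corner e" "v \<in> corner e" using uv corner_unit_in_corner by auto
  have "p = (u * x) * (y * v)" using uv by (simp add: mult.assoc)
  then have "corner_unit e (u * x) \<or> corner_unit e (y * v)"
    using p corner_mult uc x y unfolding corner_irreducible_def by blast
  then show False using corner_unit_mult_iff uc x y nx ny by blast
qed

end

section \<open>A representation of eMe on the Kronecker module\<close>

definition kron_corner_rep :: "'m::monoid_mult \<Rightarrow> 'm \<Rightarrow> 'm \<Rightarrow> nat \<Rightarrow> 'm \<Rightarrow> 'k::semiring_1 mat" where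
  "kron_corner_rep e p q n x =
    (if corner_unit e x then 1\<^sub>m (2*n+1)
     else if corner_associates e x p then kron_P n
     else if corner_associates e x q then kron_Q n
     else 0\<^sub>m (2*n+1) (2*n+1))"

lemma kron_corner_rep_carrier: "kron_corner_rep e p q n x \<in> carrier_mat (2*n+1) (2*n+1)"
  unfolding kron_corner_rep_def using kron_P_carrier kron_Q_carrier by auto

context idempotent_elem
begin

lemma kron_corner_rep_unit_mult:
  assumes u: "corner_unit e u" and y: "y \<in> corner e"
  shows "kron_corner_rep e p q n (u * y) = kron_corner_rep e p q n y"
    and "kron_corner_rep e p q n (y * u) = kron_corner_rep e p q n y"
  unfolding kron_corner_rep_def
  by (simp_all add: corner_unit_mult_left_iff[OF u y] corner_unit_mult_right_iff[OF u y]
      corner_associates_mult_left_iff[OF u y] corner_associates_mult_right_iff[OF u y])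

lemma kron_corner_rep_idem: "kron_corner_rep e p q n e = 1\<^sub>m (2*n+1)"
  unfolding kron_corner_rep_def using corner_unit_idem by simp

end

locale corner_pair = finite_corner e for e :: "'m::monoid_mult" +
  fixes p q :: 'm
  assumes irreducible_p: "corner_irreducible e p" and irreducible_q: "corner_irreducible e q"
    and not_associates: "\<not> corner_associates e p q"
begin

lemma kron_corner_rep_mult:
  assumes x: "x \<in> corner e" and y: "y \<in> corner e"
  shows "kron_corner_rep e p q n (x * y) =
    (kron_corner_rep e p q n x * kron_corner_rep e p q n y :: 'k::semiring_1 mat)"
proof -
  let ?\<rho> = "kron_corner_rep e p q n :: 'm \<Rightarrow> 'k::semiring_1 mat"
  consider "corner_unit e x" | "corner_unit e y" | "\<not> corner_unit e x" "\<not> corner_unit e y" by blast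
  then show ?thesis
  proof cases
    case 1
    then have "?\<rho> x = 1\<^sub>m (2*n+1)" unfolding kron_corner_rep_def by simp
    moreover have "?\<rho> (x * y) = 1\<^sub>m (2*n+1) * ?\<rho> y"
      using kron_corner_rep_unit_mult(1)[OF 1 y] left_mult_one_mat[OF kron_corner_rep_carrier] by metis
    ultimately show ?thesis by simp
  next
    case 2
    then have "?\<rho> y = 1\<^sub>m (2*n+1)" unfolding kron_corner_rep_def by simp
    moreover have "?\<rho> (x * y) = ?\<rho> x * 1\<^sub>m (2*n+1)"
      using kron_corner_rep_unit_mult(2)[OF 2 x] right_mult_one_mat[OF kron_corner_rep_carrier] by metis
    ultimately show ?thesis by simp
  next
    case 3
    then have "\<not> corner_unit e (x * y)" "\<not> corner_associates e (x * y) p"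
      "\<not> corner_associates e (x * y) q"
      using corner_unit_mult_iff[OF x y] corner_irreducible_not_associates_mult[OF _ x y]
        irreducible_p irreducible_q by auto
    then have "?\<rho> (x * y) = 0\<^sub>m (2*n+1) (2*n+1)" unfolding kron_corner_rep_def by simp
    moreover have "?\<rho> x * ?\<rho> y = 0\<^sub>m (2*n+1) (2*n+1)"
    proof (cases "?\<rho> x = 0\<^sub>m (2*n+1) (2*n+1) \<or> ?\<rho> y = 0\<^sub>m (2*n+1) (2*n+1)")
      case True
      have "?\<rho> x \<in> carrier_mat (2*n+1) (2*n+1)" "?\<rho> y \<in> carrier_mat (2*n+1) (2*n+1)"
        by (rule kron_corner_rep_carrier)+
      then show ?thesis using True left_mult_zero_mat right_mult_zero_mat by metis
    next
      case False
      then have "?\<rho> x \<in> {kron_P n, kron_Q n}" "?\<rho> y \<in> {kron_P n, kron_Q n}"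
        using 3 unfolding kron_corner_rep_def by (auto split: if_splits)
      then show ?thesis by (rule kron_mult_zero)
    qed
    ultimately show ?thesis by simp
  qed
qed

lemma kron_corner_rep_p: "kron_corner_rep e p q n p = kron_P n"
  using irreducible_p corner_associates_refl
  unfolding kron_corner_rep_def corner_irreducible_def by simp

lemma kron_corner_rep_q: "kron_corner_rep e p q n q = kron_Q n"
proof -
  have "p \<in> corner e" using irreducible_p unfolding corner_irreducible_def by blast
  then have "\<not> corner_associates e q p" using corner_associates_sym not_associates by blast
  then show ?thesis using irreducible_q corner_associates_refl
    unfolding kron_corner_rep_def corner_irreducible_def by simp
qed

lemma idempotent_commutant_kron_corner_rep:
  "idempotent_commutant_trivial (2*n+1) (kron_corner_rep e p q n ` corner e :: 'k::field mat set)"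
proof (rule idempotent_commutant_trivial_mono[OF _ idempotent_commutant_kron])
  show "{kron_P n, kron_Q n} \<subseteq> kron_corner_rep e p q n ` corner e"
    using irreducible_p irreducible_q kron_corner_rep_p kron_corner_rep_q
    unfolding corner_irreducible_def by (metis empty_subsetI image_eqI insert_subset)
qed

end

section \<open>Families of vectors indexed by a finite type\<close>

definition enum_idx :: "'a::finite \<Rightarrow> nat" where
  "enum_idx = (SOME f. bij_betw f (UNIV :: 'a set) {0..<CARD('a)})"

definition enum_elem :: "nat \<Rightarrow> 'a::finite" where
  "enum_elem = inv_into UNIV enum_idx"

lemma bij_enum_idx: "bij_betw (enum_idx :: 'a::finite \<Rightarrow> nat) UNIV {0..<CARD('a)}"
proof -
  have "\<exists>f. bij_betw f (UNIV :: 'a set) {0..<CARD('a)}"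
    using ex_bij_betw_finite_nat[of "UNIV :: 'a set"] by simp
  then show ?thesis unfolding enum_idx_def by (rule someI_ex)
qed

lemma enum_idx_less [simp]: "enum_idx (x :: 'a::finite) < CARD('a)"
  using bij_enum_idx[where 'a='a] unfolding bij_betw_def by auto

lemma enum_elem_enum_idx [simp]: "enum_elem (enum_idx x) = (x :: 'a::finite)"
  unfolding enum_elem_def using bij_enum_idx[where 'a='a] unfolding bij_betw_def
  by (simp add: inv_into_f_f)

lemma enum_idx_enum_elem: "i < CARD('a::finite) \<Longrightarrow> enum_idx (enum_elem i :: 'a) = i"
  unfolding enum_elem_def using bij_enum_idx[where 'a='a] unfolding bij_betw_def
  by (simp add: f_inv_into_f)

lemma mult_add_less_mult: "a < c \<Longrightarrow> i < k \<Longrightarrow> a * k + i < c * (k::nat)"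
proof -
  assume "a < c" "i < k"
  then have "a * k + i < (a + 1) * k" by simp
  also have "\<dots> \<le> c * k" using \<open>a < c\<close> by (intro mult_right_mono) auto
  finally show ?thesis .
qed

text \<open>A vector of dimension CARD('a) * K encodes the family of K-vectors
  (block K h a) indexed by a :: 'a.\<close>
definition block :: "nat \<Rightarrow> 'b vec \<Rightarrow> 'a::finite \<Rightarrow> 'b vec" where
  "block K h a = vec K (\<lambda>i. h $ (enum_idx a * K + i))"

lemma dim_block [simp]: "dim_vec (block K h a) = K"
  unfolding block_def by simp

lemma block_carrier [simp]: "block K h a \<in> carrier_vec K"
  unfolding carrier_vec_def by simp

lemma index_block [simp]: "i < K \<Longrightarrow> block K h a $ i = h $ (enum_idx a * K + i)"
  unfolding block_def by simp

lemma enum_idx_block_less: "i < K \<Longrightarrow> enum_idx (a :: 'a::finite) * K + i < CARD('a) * K"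
  by (rule mult_add_less_mult[OF enum_idx_less])

lemma block_eqI:
  assumes h: "h \<in> carrier_vec (CARD('a::finite) * K)" and h': "h' \<in> carrier_vec (CARD('a) * K)"
    and eq: "\<And>b :: 'a. block K h b = block K h' b"
  shows "h = h'"
proof (rule eq_vecI)
  fix r assume "r < dim_vec h'"
  then have r: "r < CARD('a) * K" using h' by simp
  then have "K > 0" by (cases K) auto
  then have rK: "r mod K < K" by simp
  define b :: 'a where "b = enum_elem (r div K)"
  have "enum_idx b * K + r mod K = r"
    unfolding b_def using enum_idx_enum_elem[of "r div K", where 'a='a] r
    by (simp add: less_mult_imp_div_less)
  moreover have "block K h b $ (r mod K) = block K h' b $ (r mod K)" using eq by simp
  ultimately show "h $ r = h' $ r" using rK by simp
qed (use h h' in simp)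

lemma block_add:
  "h \<in> carrier_vec (CARD('a::finite) * K) \<Longrightarrow> h' \<in> carrier_vec (CARD('a) * K) \<Longrightarrow>
   block K (h + h') (a :: 'a) = block K h a + block K h' a"
  by (intro eq_vecI) (auto simp: enum_idx_block_less)

lemma block_smult:
  "h \<in> carrier_vec (CARD('a::finite) * K) \<Longrightarrow> block K (c \<cdot>\<^sub>v h) (a :: 'a) = c \<cdot>\<^sub>v block K h a"
  by (intro eq_vecI) (auto simp: enum_idx_block_less)

lemma block_zero: "block K (0\<^sub>v (CARD('a::finite) * K)) (a :: 'a) = 0\<^sub>v K"
  by (intro eq_vecI) (auto simp: enum_idx_block_less)

definition select_mat :: "nat \<Rightarrow> nat \<Rightarrow> (nat \<Rightarrow> nat) \<Rightarrow> 'a::semiring_1 mat" where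
  "select_mat nr nc f = mat nr nc (\<lambda>(r, s). if s = f r then 1 else 0)"

lemma dim_select_mat [simp]: "dim_row (select_mat nr nc f) = nr" "dim_col (select_mat nr nc f) = nc"
  unfolding select_mat_def by simp_all

lemma select_mat_carrier [simp]: "select_mat nr nc f \<in> carrier_mat nr nc"
  unfolding carrier_mat_def by simp

lemma select_mat_mult_vec_index:
  assumes h: "h \<in> carrier_vec nc" and r: "r < nr" and f: "f r < nc"
  shows "(select_mat nr nc f *\<^sub>v h) $ r = h $ f r"
proof -
  have "(select_mat nr nc f *\<^sub>v h) $ r = row (select_mat nr nc f) r \<bullet> h" using r by simp
  also have "\<dots> = (\<Sum>s\<in>{0..<nc}. row (select_mat nr nc f) r $ s * h $ s)"
    using h unfolding scalar_prod_def by simp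
  also have "\<dots> = h $ f r"
    by (rule trans[OF sum_atLeast0_lessThan_delta[where a = "f r" and g = "h $ f r"]])
       (use r f in \<open>auto simp: select_mat_def\<close>)
  finally show ?thesis .
qed

definition block_proj :: "nat \<Rightarrow> 'm::finite \<Rightarrow> 'a::semiring_1 mat" where
  "block_proj K a = select_mat K (CARD('m) * K) (\<lambda>i. enum_idx a * K + i)"

lemma block_proj_carrier: "block_proj K (a :: 'm::finite) \<in> carrier_mat K (CARD('m) * K)"
  unfolding block_proj_def by simp

lemma block_proj_mult_vec:
  assumes h: "h \<in> carrier_vec (CARD('m::finite) * K)"
  shows "block_proj K (a :: 'm) *\<^sub>v h = block K h a"
proof (rule eq_vecI)
  fix i assume "i < dim_vec (block K h a)"
  then have i: "i < K" by simp
  have "(select_mat K (CARD('m) * K) (\<lambda>i. enum_idx a * K + i) *\<^sub>v h) $ i = h $ (enum_idx a * K + i)"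
    by (rule select_mat_mult_vec_index[where f = "\<lambda>i. enum_idx a * K + i", OF h i enum_idx_block_less[OF i]])
  then show "(block_proj K a *\<^sub>v h) $ i = block K h a $ i" unfolding block_proj_def using i by simp
qed (simp add: block_proj_def)

text \<open>K copies of the right regular representation: (m h)_b = h_(b m).\<close>
definition regular_rep :: "nat \<Rightarrow> 'm::{finite,monoid_mult} \<Rightarrow> 'a::semiring_1 mat" where
  "regular_rep K m = select_mat (CARD('m) * K) (CARD('m) * K)
     (\<lambda>r. enum_idx (enum_elem (r div K) * m) * K + r mod K)"

lemma dim_regular_rep [simp]:
  "dim_row (regular_rep K (m :: 'm::{finite,monoid_mult})) = CARD('m) * K"
  "dim_col (regular_rep K (m :: 'm::{finite,monoid_mult})) = CARD('m) * K"
  unfolding regular_rep_def by simp_all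

lemma regular_rep_carrier [simp]:
  "regular_rep K (m :: 'm::{finite,monoid_mult}) \<in> carrier_mat (CARD('m) * K) (CARD('m) * K)"
  unfolding carrier_mat_def by simp

lemma regular_rep_mult_vec_carrier [simp]:
  "h \<in> carrier_vec (CARD('m::{finite,monoid_mult}) * K) \<Longrightarrow>
   regular_rep K (m :: 'm) *\<^sub>v h \<in> carrier_vec (CARD('m) * K)"
  using mult_mat_vec_carrier[OF regular_rep_carrier] .

lemma block_regular_rep:
  assumes h: "h \<in> carrier_vec (CARD('m::{finite,monoid_mult}) * K)"
  shows "block K (regular_rep K m *\<^sub>v h) (b :: 'm) = block K h (b * m)"
proof (rule eq_vecI)
  fix i assume "i < dim_vec (block K h (b * m))"
  then have i: "i < K" by simp
  have "(enum_idx b * K + i) div K = enum_idx b" "(enum_idx b * K + i) mod K = i" using i by auto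
  then show "block K (regular_rep K m *\<^sub>v h) b $ i = block K h (b * m) $ i"
    unfolding regular_rep_def
    using i select_mat_mult_vec_index[OF h enum_idx_block_less[OF i, of b]]
      enum_idx_block_less[OF i, of "b * m"]
    by simp
qed simp

lemma is_rep_regular_rep:
  "is_rep (CARD('m::{finite,monoid_mult}) * K) (regular_rep K :: 'm \<Rightarrow> 'a::field mat)"
  unfolding is_rep_def
proof (intro conjI allI)
  let ?n = "CARD('m) * K"
  show "regular_rep K m \<in> carrier_mat ?n ?n" for m :: 'm by simp
  show "(regular_rep K (1::'m) :: 'a mat) = 1\<^sub>m ?n"
  proof (rule mat_eqI_mult_vec[OF regular_rep_carrier one_carrier_mat])
    fix v :: "'a vec" assume v: "v \<in> carrier_vec ?n"
    show "regular_rep K (1::'m) *\<^sub>v v = 1\<^sub>m ?n *\<^sub>v v"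
      by (rule block_eqI[where 'a='m and K=K])
         (use v in \<open>auto simp: block_regular_rep\<close>)
  qed
  fix a b :: 'm
  show "(regular_rep K (a * b) :: 'a mat) = regular_rep K a * regular_rep K b"
  proof (rule mat_eqI_mult_vec[OF regular_rep_carrier mult_carrier_mat[OF regular_rep_carrier regular_rep_carrier]])
    fix v :: "'a vec" assume v: "v \<in> carrier_vec ?n"
    have "regular_rep K a * regular_rep K b *\<^sub>v v = regular_rep K a *\<^sub>v (regular_rep K b *\<^sub>v v)"
      by (rule assoc_mult_mat_vec[OF regular_rep_carrier regular_rep_carrier v])
    also have "\<dots> = regular_rep K (a * b) *\<^sub>v v"
      by (rule block_eqI[where 'a='m and K=K]) (use v in \<open>auto simp: block_regular_rep mult.assoc\<close>)
    finally show "regular_rep K (a * b) *\<^sub>v v = regular_rep K a * regular_rep K b *\<^sub>v v" by simp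
  qed
qed

section \<open>Coinduction from the corner monoid\<close>

locale corner_rep = idempotent_elem e for e :: "'m::{monoid_mult,finite}" +
  fixes K :: nat and \<rho> :: "'m \<Rightarrow> 'k::field mat"
  assumes rep_carrier: "x \<in> corner e \<Longrightarrow> \<rho> x \<in> carrier_mat K K"
    and rep_idem: "\<rho> e = 1\<^sub>m K"
    and rep_mult: "x \<in> corner e \<Longrightarrow> y \<in> corner e \<Longrightarrow> \<rho> (x * y) = \<rho> x * \<rho> y"
begin

lemma dim_rep [simp]: "x \<in> corner e \<Longrightarrow> dim_row (\<rho> x) = K" "x \<in> corner e \<Longrightarrow> dim_col (\<rho> x) = K"
  using rep_carrier by auto

text \<open>The coinduced module Hom_eMe(eM, V) for V = k^K: families (h_a) of vectors of V with
  h_(x a) = x h_a for x in eMe, on which M acts by right translation (regular_rep).\<close>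
definition coinduced :: "'k vec set" where
  "coinduced = {h \<in> carrier_vec (CARD('m) * K).
     \<forall>x\<in>corner e. \<forall>a. block K h (x * a) = \<rho> x *\<^sub>v block K h a}"

lemma coinduced_carrier: "h \<in> coinduced \<Longrightarrow> h \<in> carrier_vec (CARD('m) * K)"
  unfolding coinduced_def by blast

lemma coinducedD: "h \<in> coinduced \<Longrightarrow> x \<in> corner e \<Longrightarrow> block K h (x * a) = \<rho> x *\<^sub>v block K h a"
  unfolding coinduced_def by blast

lemma coinducedI:
  "h \<in> carrier_vec (CARD('m) * K) \<Longrightarrow>
   (\<And>x a. x \<in> corner e \<Longrightarrow> block K h (x * a) = \<rho> x *\<^sub>v block K h a) \<Longrightarrow> h \<in> coinduced"
  unfolding coinduced_def by blast

lemma block_coinduced_idem: "h \<in> coinduced \<Longrightarrow> block K h (e * a) = block K h a"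
  using coinducedD[OF _ idem_in_corner] rep_idem by simp

lemma vec_subspace_coinduced: "vec_subspace (CARD('m) * K) coinduced"
  unfolding vec_subspace_def
proof (intro conjI ballI allI subsetI)
  show "h \<in> carrier_vec (CARD('m) * K)" if "h \<in> coinduced" for h
    using that by (rule coinduced_carrier)
  show "0\<^sub>v (CARD('m) * K) \<in> coinduced"
    by (rule coinducedI) (auto simp: block_zero mult_mat_vec_zero[OF rep_carrier])
  show "h + h' \<in> coinduced" if h: "h \<in> coinduced" and h': "h' \<in> coinduced" for h h'
    using coinduced_carrier[OF h] coinduced_carrier[OF h']
    by (intro coinducedI) (auto simp: block_add coinducedD[OF h] coinducedD[OF h']
        mult_add_distrib_mat_vec[OF rep_carrier])
  show "c \<cdot>\<^sub>v h \<in> coinduced" if h: "h \<in> coinduced" for c h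
    using coinduced_carrier[OF h]
    by (intro coinducedI) (auto simp: block_smult coinducedD[OF h] mult_mat_vec[OF rep_carrier])
qed

lemma regular_rep_coinduced:
  assumes h: "h \<in> coinduced"
  shows "regular_rep K (m :: 'm) *\<^sub>v h \<in> coinduced"
proof (rule coinducedI)
  have hc: "h \<in> carrier_vec (CARD('m) * K)" by (rule coinduced_carrier[OF h])
  then show "regular_rep K m *\<^sub>v h \<in> carrier_vec (CARD('m) * K)" by simp
  fix x a assume x: "x \<in> corner e"
  show "block K (regular_rep K m *\<^sub>v h) (x * a) = \<rho> x *\<^sub>v block K (regular_rep K m *\<^sub>v h) a"
    using hc coinducedD[OF h x, of "a * m"] by (simp add: block_regular_rep mult.assoc)
qed

text \<open>A section of evaluation at 1: extend v = (\<rho>(e a e) v)_a.\<close>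
definition extend :: "'k mat" where
  "extend = mat (CARD('m) * K) K (\<lambda>(r, j). \<rho> (e * enum_elem (r div K) * e) $$ (r mod K, j))"

lemma extend_carrier: "extend \<in> carrier_mat (CARD('m) * K) K"
  unfolding extend_def by simp

lemma block_extend:
  assumes v: "v \<in> carrier_vec K"
  shows "block K (extend *\<^sub>v v) b = \<rho> (e * b * e) *\<^sub>v v"
proof (rule eq_vecI)
  fix i assume "i < dim_vec (\<rho> (e * b * e) *\<^sub>v v)"
  then have i: "i < K" by simp
  have "(enum_idx b * K + i) div K = b'" "(enum_idx b * K + i) mod K = i" if "b' = enum_idx b" for b'
    using i that by auto
  then have "row extend (enum_idx b * K + i) = row (\<rho> (e * b * e)) i"
    unfolding extend_def using i enum_idx_block_less[OF i, of b] rep_carrier[OF corner_sandwich]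
    by (intro eq_vecI) auto
  then show "block K (extend *\<^sub>v v) b $ i = (\<rho> (e * b * e) *\<^sub>v v) $ i"
    using i enum_idx_block_less[OF i, of b] extend_carrier rep_carrier[OF corner_sandwich] by simp
qed (use rep_carrier[OF corner_sandwich] in simp)

lemma extend_coinduced:
  assumes v: "v \<in> carrier_vec K"
  shows "extend *\<^sub>v v \<in> coinduced"
proof (rule coinducedI)
  show "extend *\<^sub>v v \<in> carrier_vec (CARD('m) * K)" using extend_carrier v by simp
  fix x a assume x: "x \<in> corner e"
  have "e * (x * a) * e = x * (e * a * e)" using x corner_iff by (metis mult.assoc)
  then show "block K (extend *\<^sub>v v) (x * a) = \<rho> x *\<^sub>v block K (extend *\<^sub>v v) a"
    using x v by (simp add: block_extend rep_mult assoc_mult_mat_vec[OF rep_carrier rep_carrier])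
qed

lemma extend_intertwines:
  assumes x: "x \<in> corner e" and v: "v \<in> carrier_vec K"
  shows "extend *\<^sub>v (\<rho> x *\<^sub>v v) = regular_rep K x *\<^sub>v (extend *\<^sub>v v)"
proof (rule block_eqI[where 'a='m and K=K])
  fix b :: 'm
  have "e * b * e * x = e * (b * x) * e" using x corner_iff by (metis mult.assoc)
  then have "\<rho> (e * (b * x) * e) = \<rho> (e * b * e) * \<rho> x" using rep_mult[OF corner_sandwich[of b] x] by simp
  then show "block K (extend *\<^sub>v (\<rho> x *\<^sub>v v)) b = block K (regular_rep K x *\<^sub>v (extend *\<^sub>v v)) b"
    using x v extend_carrier rep_carrier[OF x]
    by (simp add: block_extend block_regular_rep
        assoc_mult_mat_vec[OF rep_carrier[OF corner_sandwich] rep_carrier[OF x]])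
qed (use x v extend_carrier rep_carrier[OF x] in auto)

lemma extend_block_one:
  assumes h: "h \<in> coinduced"
  shows "extend *\<^sub>v block K h (1 :: 'm) = regular_rep K e *\<^sub>v h"
proof (rule block_eqI[where 'a='m and K=K])
  fix b :: 'm
  have "block K (extend *\<^sub>v block K h (1 :: 'm)) b = block K h (e * b * e * 1)"
    using coinducedD[OF h corner_sandwich[of b], of 1] by (simp add: block_extend)
  also have "\<dots> = block K h (b * e)" using block_coinduced_idem[OF h] by (simp add: mult.assoc)
  finally show "block K (extend *\<^sub>v block K h (1 :: 'm)) b = block K (regular_rep K e *\<^sub>v h) b"
    using coinduced_carrier[OF h] by (simp add: block_regular_rep)
qed (use extend_carrier coinduced_carrier[OF h] in auto)

end

locale coinduced_basis = corner_rep e K \<rho>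
  for e :: "'m::{monoid_mult,finite}" and K and \<rho> :: "'m \<Rightarrow> 'k::field mat" +
  fixes d :: nat and B :: "'k mat" and \<sigma> :: "'m \<Rightarrow> 'k mat"
  assumes basis: "mat_basis (CARD('m) * K) d B coinduced"
    and sub_rep: "is_rep d \<sigma>"
    and intertwines: "\<And>m. regular_rep K m * B = B * \<sigma> m"
begin

lemma B_carrier: "B \<in> carrier_mat (CARD('m) * K) d"
  using basis unfolding mat_basis_def by blast

lemma B_coinduced: "c \<in> carrier_vec d \<Longrightarrow> B *\<^sub>v c \<in> coinduced"
  using basis unfolding mat_basis_def by blast

lemma B_onto: "h \<in> coinduced \<Longrightarrow> \<exists>c\<in>carrier_vec d. B *\<^sub>v c = h"
  using basis unfolding mat_basis_def by blast

lemma B_cancel: "u \<in> carrier_vec d \<Longrightarrow> w \<in> carrier_vec d \<Longrightarrow> B *\<^sub>v u = B *\<^sub>v w \<Longrightarrow> u = w"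
  using basis mult_mat_vec_cancel_left[OF B_carrier] unfolding mat_basis_def by blast

lemma \<sigma>_carrier: "\<sigma> m \<in> carrier_mat d d"
  using sub_rep unfolding is_rep_def by blast

lemma B_\<sigma>: "c \<in> carrier_vec d \<Longrightarrow> B *\<^sub>v (\<sigma> m *\<^sub>v c) = regular_rep K m *\<^sub>v (B *\<^sub>v c)"
  using intertwines[of m] B_carrier \<sigma>_carrier
  by (metis assoc_mult_mat_vec regular_rep_carrier)

text \<open>lift and restrict transport V into and out of the subrepresentation:
  B lift = extend and restrict = evaluation at 1 after B.\<close>
definition lift :: "'k mat" where
  "lift = mat d K (\<lambda>(i, j). (SOME c. c \<in> carrier_vec d \<and> B *\<^sub>v c = col extend j) $ i)"

definition restrict :: "'k mat" where
  "restrict = block_proj K (1 :: 'm) * B"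

lemma lift_carrier: "lift \<in> carrier_mat d K"
  unfolding lift_def by simp

lemma restrict_carrier: "restrict \<in> carrier_mat K d"
  unfolding restrict_def by (rule mult_carrier_mat[OF block_proj_carrier B_carrier])

lemma B_lift: "v \<in> carrier_vec K \<Longrightarrow> B *\<^sub>v (lift *\<^sub>v v) = extend *\<^sub>v v"
proof -
  assume v: "v \<in> carrier_vec K"
  have "B * lift = extend"
  proof (rule mat_col_eqI)
    fix j assume "j < dim_col extend"
    then have j: "j < K" using extend_carrier by simp
    define c where "c = (SOME c. c \<in> carrier_vec d \<and> B *\<^sub>v c = col extend j)"
    have "col extend j = extend *\<^sub>v unit_vec K j" using mult_mat_vec_unit_vec[OF extend_carrier j] by simp
    then have "\<exists>c. c \<in> carrier_vec d \<and> B *\<^sub>v c = col extend j"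
      using B_onto extend_coinduced[of "unit_vec K j"] by auto
    then have "c \<in> carrier_vec d \<and> B *\<^sub>v c = col extend j" unfolding c_def by (rule someI_ex)
    then have c: "c \<in> carrier_vec d" "B *\<^sub>v c = col extend j" by auto
    have "col lift j = c" unfolding lift_def c_def using c(1) j by (intro eq_vecI) (auto simp: c_def)
    then show "col (B * lift) j = col extend j" using col_mult2[OF B_carrier lift_carrier j] c by simp
  qed (use B_carrier lift_carrier extend_carrier in auto)
  then show ?thesis using B_carrier lift_carrier v by (metis assoc_mult_mat_vec)
qed

lemma restrict_mult_vec:
  assumes c: "c \<in> carrier_vec d"
  shows "restrict *\<^sub>v c = block K (B *\<^sub>v c) (1 :: 'm)"
proof -
  have "restrict *\<^sub>v c = block_proj K (1 :: 'm) *\<^sub>v (B *\<^sub>v c)"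
    unfolding restrict_def by (rule assoc_mult_mat_vec[OF block_proj_carrier B_carrier c])
  then show ?thesis using B_carrier c by (simp add: block_proj_mult_vec)
qed

lemma restrict_\<sigma>:
  assumes c: "c \<in> carrier_vec d"
  shows "restrict *\<^sub>v (\<sigma> a *\<^sub>v c) = block K (B *\<^sub>v c) a"
proof -
  have "restrict *\<^sub>v (\<sigma> a *\<^sub>v c) = block K (regular_rep K a *\<^sub>v (B *\<^sub>v c)) (1 :: 'm)"
    using \<sigma>_carrier[of a] c by (simp add: restrict_mult_vec B_\<sigma>)
  then show ?thesis using B_carrier c by (simp add: block_regular_rep)
qed

lemma lift_intertwines:
  assumes x: "x \<in> corner e" and v: "v \<in> carrier_vec K"
  shows "lift *\<^sub>v (\<rho> x *\<^sub>v v) = \<sigma> x *\<^sub>v (lift *\<^sub>v v)"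
proof (rule B_cancel)
  show "lift *\<^sub>v (\<rho> x *\<^sub>v v) \<in> carrier_vec d" "\<sigma> x *\<^sub>v (lift *\<^sub>v v) \<in> carrier_vec d"
    using lift_carrier rep_carrier[OF x] \<sigma>_carrier[of x] v by auto
  have "B *\<^sub>v (lift *\<^sub>v (\<rho> x *\<^sub>v v)) = regular_rep K x *\<^sub>v (extend *\<^sub>v v)"
    using B_lift extend_intertwines[OF x v] rep_carrier[OF x] v by simp
  also have "\<dots> = B *\<^sub>v (\<sigma> x *\<^sub>v (lift *\<^sub>v v))" using B_lift B_\<sigma> lift_carrier v by simp
  finally show "B *\<^sub>v (lift *\<^sub>v (\<rho> x *\<^sub>v v)) = B *\<^sub>v (\<sigma> x *\<^sub>v (lift *\<^sub>v v))" .
qed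

lemma restrict_intertwines:
  assumes x: "x \<in> corner e" and c: "c \<in> carrier_vec d"
  shows "restrict *\<^sub>v (\<sigma> x *\<^sub>v c) = \<rho> x *\<^sub>v (restrict *\<^sub>v c)"
  using coinducedD[OF B_coinduced[OF c] x, of 1] c by (simp add: restrict_\<sigma> restrict_mult_vec)

lemma lift_restrict:
  assumes c: "c \<in> carrier_vec d"
  shows "lift *\<^sub>v (restrict *\<^sub>v c) = \<sigma> e *\<^sub>v c"
proof (rule B_cancel)
  show "lift *\<^sub>v (restrict *\<^sub>v c) \<in> carrier_vec d" "\<sigma> e *\<^sub>v c \<in> carrier_vec d"
    using lift_carrier restrict_carrier \<sigma>_carrier[of e] c by auto
  have "B *\<^sub>v (lift *\<^sub>v (restrict *\<^sub>v c)) = extend *\<^sub>v block K (B *\<^sub>v c) (1 :: 'm)"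
    using c restrict_carrier by (simp add: B_lift restrict_mult_vec)
  also have "\<dots> = regular_rep K e *\<^sub>v (B *\<^sub>v c)" by (rule extend_block_one[OF B_coinduced[OF c]])
  finally show "B *\<^sub>v (lift *\<^sub>v (restrict *\<^sub>v c)) = B *\<^sub>v (\<sigma> e *\<^sub>v c)" using B_\<sigma>[OF c] by simp
qed

lemma restrict_lift: "restrict * lift = 1\<^sub>m K"
proof (rule mat_eqI_mult_vec[OF mult_carrier_mat[OF restrict_carrier lift_carrier] one_carrier_mat])
  fix v :: "'k vec" assume v: "v \<in> carrier_vec K"
  have "restrict * lift *\<^sub>v v = block K (extend *\<^sub>v v) (1 :: 'm)"
    using restrict_carrier lift_carrier v by (simp add: assoc_mult_mat_vec restrict_mult_vec B_lift)
  also have "\<dots> = v" using v by (simp add: block_extend idem rep_idem)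
  finally show "restrict * lift *\<^sub>v v = 1\<^sub>m K *\<^sub>v v" using v by simp
qed

lemma dim_le: "K \<le> d"
  by (rule right_inverse_mat_dim_le[OF restrict_carrier lift_carrier restrict_lift])

context
  fixes E :: "'k mat"
  assumes E: "E \<in> carrier_mat d d" and E_commute: "\<And>m. E * \<sigma> m = \<sigma> m * E"
begin

lemma E_\<sigma>: "c \<in> carrier_vec d \<Longrightarrow> E *\<^sub>v (\<sigma> m *\<^sub>v c) = \<sigma> m *\<^sub>v (E *\<^sub>v c)"
  using E_commute[of m] E \<sigma>_carrier by (metis assoc_mult_mat_vec)

lemma restrict_endo_carrier: "restrict * E * lift \<in> carrier_mat K K"
  using restrict_carrier E lift_carrier by simp

lemma restrict_endo_mult_vec:
  assumes v: "v \<in> carrier_vec K"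
  shows "(restrict * E * lift) *\<^sub>v v = restrict *\<^sub>v (E *\<^sub>v (lift *\<^sub>v v))"
proof -
  have "(restrict * E * lift) *\<^sub>v v = (restrict * E) *\<^sub>v (lift *\<^sub>v v)"
    by (rule assoc_mult_mat_vec[OF mult_carrier_mat[OF restrict_carrier E] lift_carrier v])
  also have "\<dots> = restrict *\<^sub>v (E *\<^sub>v (lift *\<^sub>v v))"
    by (rule assoc_mult_mat_vec[OF restrict_carrier E]) (use lift_carrier v in simp)
  finally show ?thesis .
qed

text \<open>Hence E is determined by the endomorphism restrict E lift of V.\<close>
lemma block_endo:
  assumes c: "c \<in> carrier_vec d"
  shows "block K (B *\<^sub>v (E *\<^sub>v c)) (a :: 'm) = (restrict * E * lift) *\<^sub>v block K (B *\<^sub>v c) a"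
proof -
  let ?u = "\<sigma> a *\<^sub>v c"
  have u: "?u \<in> carrier_vec d" using \<sigma>_carrier[of a] c by simp
  have Eu: "E *\<^sub>v ?u \<in> carrier_vec d" using E u by simp
  have "block K (B *\<^sub>v (E *\<^sub>v c)) a = restrict *\<^sub>v (E *\<^sub>v ?u)"
    using E c by (simp add: restrict_\<sigma> E_\<sigma>)
  also have "\<dots> = restrict *\<^sub>v (\<sigma> e *\<^sub>v (E *\<^sub>v ?u))"
    using restrict_intertwines[OF idem_in_corner Eu] restrict_carrier Eu by (simp add: rep_idem)
  also have "\<dots> = restrict *\<^sub>v (E *\<^sub>v (lift *\<^sub>v (restrict *\<^sub>v ?u)))"
    using u by (simp add: E_\<sigma> lift_restrict)
  also have "\<dots> = (restrict * E * lift) *\<^sub>v block K (B *\<^sub>v c) a"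
    using restrict_carrier u c by (simp add: restrict_endo_mult_vec restrict_\<sigma>)
  finally show ?thesis .
qed

lemma restrict_endo_commute:
  assumes x: "x \<in> corner e"
  shows "(restrict * E * lift) * \<rho> x = \<rho> x * (restrict * E * lift)"
proof (rule mat_eqI_mult_vec[of _ K K])
  fix v :: "'k vec" assume v: "v \<in> carrier_vec K"
  have lv: "lift *\<^sub>v v \<in> carrier_vec d" using lift_carrier v by simp
  have "(restrict * E * lift) * \<rho> x *\<^sub>v v = restrict *\<^sub>v (E *\<^sub>v (lift *\<^sub>v (\<rho> x *\<^sub>v v)))"
    using restrict_endo_carrier rep_carrier[OF x] v by (simp add: restrict_endo_mult_vec)
  also have "\<dots> = restrict *\<^sub>v (\<sigma> x *\<^sub>v (E *\<^sub>v (lift *\<^sub>v v)))"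
    using lv by (simp add: lift_intertwines[OF x v] E_\<sigma>)
  also have "\<dots> = \<rho> x * (restrict * E * lift) *\<^sub>v v"
    using restrict_endo_carrier rep_carrier[OF x] v E lv
    by (simp add: restrict_intertwines[OF x] restrict_endo_mult_vec)
  finally show "(restrict * E * lift) * \<rho> x *\<^sub>v v = \<rho> x * (restrict * E * lift) *\<^sub>v v" .
qed (use restrict_endo_carrier rep_carrier[OF x] in auto)

lemma restrict_endo_idempotent:
  assumes EE: "E * E = E"
  shows "(restrict * E * lift) * (restrict * E * lift) = restrict * E * lift"
proof (rule mat_eqI_mult_vec[of _ K K])
  fix v :: "'k vec" assume v: "v \<in> carrier_vec K"
  have lv: "lift *\<^sub>v v \<in> carrier_vec d" using lift_carrier v by simp
  let ?w = "E *\<^sub>v (lift *\<^sub>v v)"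
  have w: "?w \<in> carrier_vec d" using E lv by simp
  have "\<sigma> e *\<^sub>v (lift *\<^sub>v v) = lift *\<^sub>v v"
    using lift_intertwines[OF idem_in_corner v] v by (simp add: rep_idem)
  moreover have "\<sigma> e *\<^sub>v ?w = E *\<^sub>v (\<sigma> e *\<^sub>v (lift *\<^sub>v v))" using lv by (simp add: E_\<sigma>)
  ultimately have "lift *\<^sub>v (restrict *\<^sub>v ?w) = ?w" using lift_restrict[OF w] by simp
  moreover have "E *\<^sub>v ?w = ?w" using EE E lv by (metis assoc_mult_mat_vec)
  ultimately show "(restrict * E * lift) * (restrict * E * lift) *\<^sub>v v = restrict * E * lift *\<^sub>v v"
    using restrict_endo_carrier restrict_carrier v w by (simp add: restrict_endo_mult_vec)
qed (use restrict_endo_carrier in auto)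

end

lemma idempotent_commutant_trivial_sub_rep:
  assumes triv: "idempotent_commutant_trivial K (\<rho> ` corner e)"
  shows "idempotent_commutant_trivial d (range \<sigma>)"
  unfolding idempotent_commutant_trivial_def
proof (intro ballI impI)
  fix E assume E: "E \<in> carrier_mat d d" and "E * E = E \<and> (\<forall>A\<in>range \<sigma>. E * A = A * E)"
  then have EE: "E * E = E" and comm: "\<And>m. E * \<sigma> m = \<sigma> m * E" by auto
  let ?T = "restrict * E * lift"
  have "?T \<in> carrier_mat K K" using restrict_carrier E lift_carrier by simp
  then have T: "?T = 0\<^sub>m K K \<or> ?T = 1\<^sub>m K"
    using triv restrict_endo_idempotent[OF E comm EE] restrict_endo_commute[OF E comm]
    unfolding idempotent_commutant_trivial_def by blast
  have "B *\<^sub>v (E *\<^sub>v c) = (if ?T = 0\<^sub>m K K then 0\<^sub>v (CARD('m) * K) else B *\<^sub>v c)"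
    if c: "c \<in> carrier_vec d" for c
  proof (rule block_eqI[where 'a='m and K=K])
    show "B *\<^sub>v (E *\<^sub>v c) \<in> carrier_vec (CARD('m) * K)"
      "(if ?T = 0\<^sub>m K K then 0\<^sub>v (CARD('m) * K) else B *\<^sub>v c) \<in> carrier_vec (CARD('m) * K)"
      using B_carrier E c by auto
    fix b :: 'm
    show "block K (B *\<^sub>v (E *\<^sub>v c)) b = block K (if ?T = 0\<^sub>m K K then 0\<^sub>v (CARD('m) * K) else B *\<^sub>v c) b"
      using T block_endo[OF E comm c, of b] by (auto simp: block_zero zero_mult_mat_vec)
  qed
  then have "E *\<^sub>v c = (if ?T = 0\<^sub>m K K then 0\<^sub>v d else c)" if c: "c \<in> carrier_vec d" for c
    using B_cancel[of "E *\<^sub>v c"] E c B_carrier by (auto simp: mult_mat_vec_zero)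
  then show "E = 0\<^sub>m d d \<or> E = 1\<^sub>m d"
    using E by (cases "?T = 0\<^sub>m K K") (auto intro!: mat_eqI_mult_vec simp: mult_mat_vec_zero)
qed

end

context corner_rep
begin

theorem exists_indecomposable_rep:
  assumes K: "0 < K" and triv: "idempotent_commutant_trivial K (\<rho> ` corner e)"
  shows "\<exists>d (\<sigma> :: 'm \<Rightarrow> 'k mat). K \<le> d \<and> indecomposable_rep d \<sigma>"
proof -
  obtain d B and \<sigma> :: "'m \<Rightarrow> 'k mat" where basis: "mat_basis (CARD('m) * K) d B coinduced"
    and rep: "is_rep d \<sigma>" and comm: "\<And>m. regular_rep K m * B = B * \<sigma> m"
    using invariant_subspace_rep[OF is_rep_regular_rep vec_subspace_coinduced regular_rep_coinduced]
    by blast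
  interpret coinduced_basis e K \<rho> d B \<sigma>
    by (rule coinduced_basis.intro[OF corner_rep_axioms]) (unfold_locales; fact basis rep comm)
  have "indecomposable_rep d \<sigma>"
    using rep dim_le K idempotent_commutant_trivial_sub_rep[OF triv] by (intro indecomposable_repI) auto
  then show ?thesis using dim_le by blast
qed

end

theorem corollary9:
  assumes "\<exists>e :: 'm::{monoid_mult, finite}. e * e = e \<and>
             (\<exists>p q. corner_irreducible e p \<and> corner_irreducible e q \<and> \<not> corner_associates e p q)"
  shows "infinite_rep_type TYPE('m) TYPE('k::field)"
proof -
  from assms obtain e p q :: 'm where "e * e = e" and
    "corner_irreducible e p" "corner_irreducible e q" "\<not> corner_associates e p q"
    by blast
  then interpret corner_pair e p q by unfold_locales auto
  show ?thesis
  proof (rule infinite_rep_typeI)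
    fix N
    interpret V: corner_rep e "2*N+1" "kron_corner_rep e p q N :: 'm \<Rightarrow> 'k mat"
    proof unfold_locales
      show "kron_corner_rep e p q N x \<in> carrier_mat (2*N+1) (2*N+1)" for x
        by (rule kron_corner_rep_carrier)
    qed (auto simp: kron_corner_rep_idem kron_corner_rep_mult)
    have "\<exists>d (\<sigma> :: 'm \<Rightarrow> 'k mat). 2*N+1 \<le> d \<and> indecomposable_rep d \<sigma>"
      by (rule V.exists_indecomposable_rep) (simp, rule idempotent_commutant_kron_corner_rep)
    then obtain d and \<sigma> :: "'m \<Rightarrow> 'k mat" where "2*N+1 \<le> d" "indecomposable_rep d \<sigma>" by blast
    then show "\<exists>d (\<sigma> :: 'm \<Rightarrow> 'k mat). N \<le> d \<and> indecomposable_rep d \<sigma>"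
      by (intro exI[of _ d] exI[of _ \<sigma>]) simp
  qed
qed

end
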